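(* Let $M$ be a complex matrix with $2^{k+n}$ columns (and $2^{k+n+m}$ rows for some $m\ge0$) such that $M^\dagger M\preceq I$, and let $\Sigma$ be a $2^k\times 2^k$ positive semidefinite matrix. For an $n$-qubit state $\rho$ define $A^\rho_M(\Sigma)=\mathrm{Tr}_{>k}\big(M(\Sigma\otimes\rho)M^\dagger\big)$. Let $\rho_{\mathrm{mm}}=I/2^n$ and, for a non-identity $n$-qubit Pauli observable $P$, $\rho_P=(I+P)/2^n$. Then $$\mathbb{E}_P\left[\big\|A^{\rho_{\mathrm{mm}}}_M(\Sigma)-A^{\rho_P}_M(\Sigma)\big\|_{\mathrm{tr}}^2\right]\ \le\ \frac{1}{2^{n-k}}\cdot\frac{1}{2^{2n}-1}\cdot\Big(\mathrm{Tr}\big(M^\dagger M(\Sigma\otimes I_{2^n})\big)\Big)^2,$$ where $\mathbb{E}_P$ is over a uniformly random one of the $4^n-1$ non-identity Pauli observables.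
   Context: $\mathrm{Tr}_{>k}$ denotes the partial trace over all qubits except the first $k$. $\|\cdot\|_{\mathrm{tr}}$ is the trace norm. An $n$-qubit Pauli observable is a tensor product $\sigma_1\otimes\cdots\otimes\sigma_n$ with each $\sigma_j\in\{I,X,Y,Z\}$ (the standard Pauli matrices); non-identity means not equal to $I^{\otimes n}$. $I_{2^n}$ is the $2^n\times2^n$ identity. *)

theory Defs
  imports "Jordan_Normal_Form.Schur_Decomposition" "Jordan_Normal_Form.Char_Poly"
begin

text \<open>Kronecker (tensor) product; the first factor acts on the most significant index.\<close>
definition kron :: "complex mat \<Rightarrow> complex mat \<Rightarrow> complex mat" where
  "kron A B = mat (dim_row A * dim_row B) (dim_col A * dim_col B)
     (\<lambda>(i,j). A $$ (i div dim_row B, j div dim_col B) * B $$ (i mod dim_row B, j mod dim_col B))"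

text \<open>Partial trace over all but the first k qubits of a 2^(k+r) x 2^(k+r) matrix.\<close>
definition ptrace_keep :: "nat \<Rightarrow> nat \<Rightarrow> complex mat \<Rightarrow> complex mat" where
  "ptrace_keep k r X = mat (2^k) (2^k)
     (\<lambda>(i,j). \<Sum>l<2^r. X $$ (i * 2^r + l, j * 2^r + l))"

definition hermitian_mat :: "complex mat \<Rightarrow> bool" where
  "hermitian_mat A \<longleftrightarrow> A \<in> carrier_mat (dim_row A) (dim_row A) \<and> mat_adjoint A = A"

definition psd_mat :: "complex mat \<Rightarrow> bool" where
  "psd_mat A \<longleftrightarrow> hermitian_mat A \<and>
     (\<forall>v \<in> carrier_vec (dim_row A). Re (\<Sum>i<dim_row A. cnj (v $ i) * (A *\<^sub>v v) $ i) \<ge> 0)"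

text \<open>Trace norm: sum of singular values, i.e. sum of square roots of the eigenvalues
  (with multiplicity) of A^dagger A.\<close>
definition trace_norm :: "complex mat \<Rightarrow> real" where
  "trace_norm A = (let es = (SOME es. char_poly (mat_adjoint A * A) = (\<Prod>e\<leftarrow>es. [:- e, 1:]))
                   in (\<Sum>e\<leftarrow>es. sqrt (Re e)))"

definition mat_trace :: "complex mat \<Rightarrow> complex" where
  "mat_trace A = (\<Sum>i<dim_row A. A $$ (i,i))"

datatype pauli = PI | PX | PY | PZ

definition pauli_mat :: "pauli \<Rightarrow> complex mat" where
  "pauli_mat p = (case p of
      PI \<Rightarrow> mat_of_rows_list 2 [[1, 0], [0, 1]]
    | PX \<Rightarrow> mat_of_rows_list 2 [[0, 1], [1, 0]]
    | PY \<Rightarrow> mat_of_rows_list 2 [[0, -\<i>], [\<i>, 0]]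
    | PZ \<Rightarrow> mat_of_rows_list 2 [[1, 0], [0, -1]])"

fun pauli_obs :: "pauli list \<Rightarrow> complex mat" where
  "pauli_obs [] = 1\<^sub>m 1"
| "pauli_obs (p # ps) = kron (pauli_mat p) (pauli_obs ps)"

definition nonid_paulis :: "nat \<Rightarrow> pauli list set" where
  "nonid_paulis n = {ps. length ps = n \<and> ps \<noteq> replicate n PI}"

definition A_map :: "nat \<Rightarrow> nat \<Rightarrow> nat \<Rightarrow> complex mat \<Rightarrow> complex mat \<Rightarrow> complex mat \<Rightarrow> complex mat" where
  "A_map k n m M \<Sigma> \<rho> = ptrace_keep k (n + m) (M * kron \<Sigma> \<rho> * mat_adjoint M)"

end

theory Submission
  imports Defs "HOL-Analysis.Convex"
begin

(*
  Write K = 2^k, N = 2^n and read M blockwise, rows indexed by (a, l) and columns by (b, c)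
  with a, b < K and c < N. The map rho |-> A^rho_M(Sigma) is linear, and its (a, a') entry is
  sum_{c,c'} rho_{c c'} g(a,c; a',c'), where g is the positive semidefinite form
  <u, v> = sum_l u_l^T Sigma conj(v_l) evaluated on the slices of M with a and c fixed.
  Since rho_mm - rho_P = -P/N, the difference has entries -<P, g(a,.; a',.)>/N. The trace norm
  is at most sqrt K times the Frobenius norm; adding the identity Pauli and using that the 4^n
  Pauli matrices are orthogonal with squared Frobenius norm N gives
  sum_P ||.||_tr^2 <= (K/N) sum |g|^2. Cauchy-Schwarz for g bounds this by
  (K/N) (sum_{a,c} g(a,c; a,c))^2, and that sum is Tr(M^dagger M (Sigma (x) I)).
*)

lemma dim_row_mat_adjoint [simp]: "dim_row (mat_adjoint A) = dim_col A"
  by (simp add: mat_adjoint_def)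

lemma dim_col_mat_adjoint [simp]: "dim_col (mat_adjoint A) = dim_row A"
  by (simp add: mat_adjoint_def)

lemma index_mat_adjoint [simp]:
  "i < dim_col A \<Longrightarrow> j < dim_row A \<Longrightarrow> mat_adjoint A $$ (i, j) = conjugate (A $$ (j, i))"
  by (simp add: mat_adjoint_def mat_of_rows_index)

lemma mat_adjoint_carrier: "A \<in> carrier_mat n p \<Longrightarrow> mat_adjoint A \<in> carrier_mat p n"
  by auto

lemma index_mult_mat_sum:
  "A \<in> carrier_mat n p \<Longrightarrow> B \<in> carrier_mat p q \<Longrightarrow> i < n \<Longrightarrow> j < q \<Longrightarrow>
    (A * B) $$ (i, j) = (\<Sum>t<p. A $$ (i, t) * B $$ (t, j))"
  by (auto simp: scalar_prod_def lessThan_atLeast0 intro!: sum.cong)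

lemma index_mult_mat_vec_sum:
  "A \<in> carrier_mat n p \<Longrightarrow> v \<in> carrier_vec p \<Longrightarrow> i < n \<Longrightarrow>
    (A *\<^sub>v v) $ i = (\<Sum>j<p. A $$ (i, j) * v $ j)"
  by (auto simp: scalar_prod_def lessThan_atLeast0 intro!: sum.cong)

lemma pair_index_less: "x < (K::nat) \<Longrightarrow> l < L \<Longrightarrow> x * L + l < K * L"
proof -
  assume "x < K" "l < L"
  then have "x * L + l < (x + 1) * L" by simp
  also have "\<dots> \<le> K * L" using \<open>x < K\<close> by (intro mult_right_mono) auto
  finally show ?thesis .
qed

lemma sum_lessThan_mult_split:
  fixes f :: "nat \<Rightarrow> 'a::comm_monoid_add"
  shows "(\<Sum>s<K * N. f s) = (\<Sum>b<K. \<Sum>c<N. f (b * N + c))"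
proof -
  have "(\<Sum>s<K * N. f s) = (\<Sum>b<K. sum f {b * N..<b * N + N})"
    by (rule sum.nat_group[symmetric])
  then show ?thesis
    by (simp add: sum.atLeastLessThan_shift_0 atLeast0LessThan add.commute comp_def)
qed

lemma dim_kron [simp]:
  "dim_row (kron A B) = dim_row A * dim_row B" "dim_col (kron A B) = dim_col A * dim_col B"
  by (simp_all add: kron_def)

lemma index_kron_block:
  assumes "A \<in> carrier_mat K K'" "B \<in> carrier_mat N N'"
    and "b < K" "b' < K'" "c < N" "c' < N'"
  shows "kron A B $$ (b * N + c, b' * N' + c') = A $$ (b, b') * B $$ (c, c')"
  using assms by (simp add: kron_def pair_index_less)

lemma mat_trace_mult_comm:
  assumes A: "A \<in> carrier_mat n p" and B: "B \<in> carrier_mat p n"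
  shows "mat_trace (A * B) = mat_trace (B * A)"
proof -
  have "mat_trace (A * B) = (\<Sum>i<n. \<Sum>t<p. A $$ (i, t) * B $$ (t, i))"
    using A B by (simp del: index_mult_mat(1) add: mat_trace_def index_mult_mat_sum[OF A B])
  also have "\<dots> = (\<Sum>t<p. \<Sum>i<n. B $$ (t, i) * A $$ (i, t))"
    by (subst sum.swap) (simp add: mult.commute)
  also have "\<dots> = mat_trace (B * A)"
    using A B by (simp del: index_mult_mat(1) add: mat_trace_def index_mult_mat_sum[OF B A])
  finally show ?thesis .
qed

lemma dim_ptrace_keep [simp]:
  "dim_row (ptrace_keep k r X) = 2^k" "dim_col (ptrace_keep k r X) = 2^k"
  by (simp_all add: ptrace_keep_def)

lemma ptrace_keep_carrier: "ptrace_keep k r X \<in> carrier_mat (2^k) (2^k)"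
  by (simp add: ptrace_keep_def)

lemma mat_trace_ptrace_keep:
  assumes "X \<in> carrier_mat (2^k * 2^r) (2^k * 2^r)"
  shows "mat_trace (ptrace_keep k r X) = mat_trace X"
  using assms by (simp add: mat_trace_def ptrace_keep_def sum_lessThan_mult_split)

section \<open>Partial traces of \<open>M (S \<otimes> \<rho>) M\<^sup>\<dagger>\<close>\<close>

(* Rows of M are indexed as a * L + l and columns as b * N + c, the index convention of
   kron and ptrace_keep. *)
definition mat_slice :: "'a mat \<Rightarrow> nat \<Rightarrow> nat \<Rightarrow> nat \<Rightarrow> nat \<Rightarrow> nat \<Rightarrow> nat \<Rightarrow> 'a" where
  "mat_slice M L N a c l b = M $$ (a * L + l, b * N + c)"

definition sesq_form ::
    "complex mat \<Rightarrow> nat \<Rightarrow> nat \<Rightarrow> (nat \<Rightarrow> nat \<Rightarrow> complex) \<Rightarrow> (nat \<Rightarrow> nat \<Rightarrow> complex) \<Rightarrow> complex"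
  where "sesq_form S K L u v = (\<Sum>l<L. \<Sum>b<K. \<Sum>b'<K. u l b * S $$ (b, b') * cnj (v l b'))"

lemma index_ptrace_keep_kron:
  fixes M S \<rho> :: "complex mat"
  assumes M: "M \<in> carrier_mat (2^k * 2^r) (K * N)"
    and S: "S \<in> carrier_mat K K" and \<rho>: "\<rho> \<in> carrier_mat N N"
    and a: "a < 2^k" and a': "a' < 2^k"
  shows "ptrace_keep k r (M * kron S \<rho> * mat_adjoint M) $$ (a, a') =
    (\<Sum>c<N. \<Sum>c'<N. \<rho> $$ (c, c') *
       sesq_form S K (2^r) (mat_slice M (2^r) N a c) (mat_slice M (2^r) N a' c'))"
proof -
  let ?L = "2^r :: nat"
  have kron: "kron S \<rho> \<in> carrier_mat (K * N) (K * N)"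
    using S \<rho> by auto
  have rows: "x * ?L + l < 2^k * ?L" if "x < 2^k" "l < ?L" for x l
    using that by (rule pair_index_less)
  have adj: "mat_adjoint M \<in> carrier_mat (K * N) (2^k * ?L)"
    using M by (rule mat_adjoint_carrier)
  have entry: "(M * kron S \<rho> * mat_adjoint M) $$ (a * ?L + l, a' * ?L + l) =
      (\<Sum>s<K * N. \<Sum>t<K * N. M $$ (a * ?L + l, s) * kron S \<rho> $$ (s, t) * cnj (M $$ (a' * ?L + l, t)))"
    if l: "l < ?L" for l
  proof -
    have "(M * kron S \<rho> * mat_adjoint M) $$ (a * ?L + l, a' * ?L + l) =
        (\<Sum>s<K * N. M $$ (a * ?L + l, s) * (kron S \<rho> * mat_adjoint M) $$ (s, a' * ?L + l))"
      unfolding assoc_mult_mat[OF M kron adj]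
      by (rule index_mult_mat_sum[OF M _ rows[OF a l] rows[OF a' l]]) (use kron adj in auto)
    also have "\<dots> = (\<Sum>s<K * N. \<Sum>t<K * N. M $$ (a * ?L + l, s) * kron S \<rho> $$ (s, t) * cnj (M $$ (a' * ?L + l, t)))"
    proof (rule sum.cong[OF refl])
      fix s assume "s \<in> {..<K * N}"
      then show "M $$ (a * ?L + l, s) * (kron S \<rho> * mat_adjoint M) $$ (s, a' * ?L + l) =
          (\<Sum>t<K * N. M $$ (a * ?L + l, s) * kron S \<rho> $$ (s, t) * cnj (M $$ (a' * ?L + l, t)))"
        using M rows[OF a' l]
        by (simp del: index_mult_mat(1) add: index_mult_mat_sum[OF kron adj] sum_distrib_left mult.assoc)
    qed
    finally show ?thesis .
  qed
  have "ptrace_keep k r (M * kron S \<rho> * mat_adjoint M) $$ (a, a') =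
      (\<Sum>l<?L. \<Sum>b<K. \<Sum>c<N. \<Sum>b'<K. \<Sum>c'<N. M $$ (a * ?L + l, b * N + c) *
         (S $$ (b, b') * \<rho> $$ (c, c')) * cnj (M $$ (a' * ?L + l, b' * N + c')))"
    using a a' S \<rho> by (simp add: ptrace_keep_def entry sum_lessThan_mult_split index_kron_block)
  also have "\<dots> = (\<Sum>c<N. \<Sum>c'<N. \<Sum>l<?L. \<Sum>b<K. \<Sum>b'<K. \<rho> $$ (c, c') *
         (M $$ (a * ?L + l, b * N + c) * S $$ (b, b') * cnj (M $$ (a' * ?L + l, b' * N + c'))))"
    \<comment> \<open>instantiated with two distinct index sets, \<open>sum.swap\<close> rewrites terminatingly; it moves
      the sums over \<open>{..<N}\<close> to the front\<close>
    by (simp only: sum.swap[of _ "{..<?L}" "{..<N}"] sum.swap[of _ "{..<K}" "{..<N}"] mult_ac)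
  finally show ?thesis
    by (simp add: sesq_form_def mat_slice_def sum_distrib_left)
qed

section \<open>Trace norm and Frobenius norm\<close>

lemma quadratic_form_adjoint_mult:
  fixes A :: "complex mat"
  assumes A: "A \<in> carrier_mat n p" and v: "v \<in> carrier_vec p"
  shows "(\<Sum>i<p. cnj (v $ i) * ((mat_adjoint A * A) *\<^sub>v v) $ i) =
    of_real (\<Sum>r<n. (cmod ((A *\<^sub>v v) $ r))\<^sup>2)"
proof -
  define w where "w = A *\<^sub>v v"
  have w: "w \<in> carrier_vec n"
    using A v by (simp add: w_def)
  have adj: "mat_adjoint A \<in> carrier_mat p n"
    using A by (rule mat_adjoint_carrier)
  have "(mat_adjoint A * A) *\<^sub>v v = mat_adjoint A *\<^sub>v w"
    unfolding w_def using assoc_mult_mat_vec[OF adj A v] .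
  then have "(\<Sum>i<p. cnj (v $ i) * ((mat_adjoint A * A) *\<^sub>v v) $ i) =
      (\<Sum>i<p. \<Sum>r<n. w $ r * cnj (A $$ (r, i) * v $ i))"
    using A by (simp del: index_mult_mat_vec add: index_mult_mat_vec_sum[OF adj w] sum_distrib_left mult_ac)
  also have "\<dots> = (\<Sum>r<n. w $ r * cnj (w $ r))"
    using A v by (subst sum.swap)
      (simp del: index_mult_mat_vec add: w_def index_mult_mat_vec_sum[OF A v] cnj_sum sum_distrib_left)
  also have "\<dots> = of_real (\<Sum>r<n. (cmod (w $ r))\<^sup>2)"
    by (simp only: of_real_sum complex_norm_square)
  finally show ?thesis
    by (simp only: w_def)
qed

lemma eigenvalue_adjoint_mult_nonneg:
  fixes A :: "complex mat"
  assumes A: "A \<in> carrier_mat n p" and e: "eigenvalue (mat_adjoint A * A) e"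
  shows "0 \<le> Re e"
proof -
  have "mat_adjoint A * A \<in> carrier_mat p p"
    using A by auto
  then obtain v where v: "v \<in> carrier_vec p" "v \<noteq> 0\<^sub>v p" "(mat_adjoint A * A) *\<^sub>v v = e \<cdot>\<^sub>v v"
    using e unfolding eigenvalue_def eigenvector_def by auto
  obtain i where i: "i < p" "v $ i \<noteq> 0"
    using v(1,2) by (metis eq_vecI carrier_vecD index_zero_vec)
  have "0 < (cmod (v $ i))\<^sup>2"
    using i by simp
  also have "\<dots> \<le> (\<Sum>j<p. (cmod (v $ j))\<^sup>2)"
    using i by (intro member_le_sum) auto
  finally have norm_pos: "0 < (\<Sum>j<p. (cmod (v $ j))\<^sup>2)" .
  have "of_real (\<Sum>r<n. (cmod ((A *\<^sub>v v) $ r))\<^sup>2) = (\<Sum>j<p. cnj (v $ j) * (e * v $ j))"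
    using quadratic_form_adjoint_mult[OF A v(1)] v by simp
  also have "\<dots> = e * (\<Sum>j<p. v $ j * cnj (v $ j))"
    by (simp add: sum_distrib_left mult_ac)
  also have "\<dots> = e * of_real (\<Sum>j<p. (cmod (v $ j))\<^sup>2)"
    by (simp only: of_real_sum complex_norm_square)
  finally have eq: "of_real (\<Sum>r<n. (cmod ((A *\<^sub>v v) $ r))\<^sup>2) = e * of_real (\<Sum>j<p. (cmod (v $ j))\<^sup>2)" .
  have Re_eq: "Re e * y = x" if "complex_of_real x = e * complex_of_real y" for x y
    using arg_cong[where f = Re, OF that] by simp
  from Re_eq[OF eq]
  have "Re e * (\<Sum>j<p. (cmod (v $ j))\<^sup>2) = (\<Sum>r<n. (cmod ((A *\<^sub>v v) $ r))\<^sup>2)" .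
  moreover have "0 \<le> (\<Sum>r<n. (cmod ((A *\<^sub>v v) $ r))\<^sup>2)"
    by (intro sum_nonneg) auto
  ultimately show ?thesis
    using norm_pos by (metis zero_le_mult_iff linorder_not_less)
qed

lemma mat_trace_adjoint_mult:
  fixes A :: "complex mat"
  assumes A: "A \<in> carrier_mat n p"
  shows "mat_trace (mat_adjoint A * A) = of_real (\<Sum>i<n. \<Sum>j<p. (cmod (A $$ (i, j)))\<^sup>2)"
proof -
  have "mat_trace (mat_adjoint A * A) = (\<Sum>j<p. \<Sum>i<n. cnj (A $$ (i, j)) * A $$ (i, j))"
    using A by (simp del: index_mult_mat(1)
        add: mat_trace_def index_mult_mat_sum[OF mat_adjoint_carrier[OF A] A])
  also have "\<dots> = (\<Sum>i<n. \<Sum>j<p. A $$ (i, j) * cnj (A $$ (i, j)))"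
    by (subst sum.swap) (simp add: mult.commute)
  also have "\<dots> = of_real (\<Sum>i<n. \<Sum>j<p. (cmod (A $$ (i, j)))\<^sup>2)"
    by (simp only: of_real_sum complex_norm_square)
  finally show ?thesis .
qed

lemma mat_trace_eq_sum_eigenvalues:
  fixes A :: "complex mat"
  assumes A: "A \<in> carrier_mat n n" and es: "char_poly A = (\<Prod>e\<leftarrow>es. [:- e, 1:])"
  shows "mat_trace A = sum_list es"
proof -
  obtain B P Q where "schur_decomposition A es = (B, P, Q)"
    by (cases "schur_decomposition A es")
  from schur_decomposition[OF A es this]
  have "similar_mat_wit A B P Q" and diag: "diag_mat B = es"
    by auto
  then have B: "B \<in> carrier_mat n n" and P: "P \<in> carrier_mat n n" and Q: "Q \<in> carrier_mat n n"
    and QP: "Q * P = 1\<^sub>m n" and APBQ: "A = P * B * Q"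
    using A unfolding similar_mat_wit_def Let_def by auto
  have "mat_trace A = mat_trace (P * (B * Q))"
    using APBQ B P Q by (simp add: assoc_mult_mat)
  also have "\<dots> = mat_trace (B * Q * P)"
    using B P Q by (intro mat_trace_mult_comm) auto
  also have "\<dots> = mat_trace B"
    using B P Q QP by (simp add: assoc_mult_mat)
  also have "\<dots> = sum_list es"
    unfolding diag[symmetric] diag_mat_def mat_trace_def
    by (simp add: sum_list_sum_nth atLeast0LessThan)
  finally show ?thesis .
qed

text \<open>The eigenvalues of \<open>X\<^sup>\<dagger>X\<close> are the squared singular values of \<open>X\<close>; they sum to the squared
  Frobenius norm, and Cauchy--Schwarz for the \<open>n\<close> singular values gives the factor \<open>n\<close>.\<close>
lemma trace_norm_sq_le:
  fixes X :: "complex mat"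
  assumes X: "X \<in> carrier_mat n n"
  shows "(trace_norm X)\<^sup>2 \<le> n * (\<Sum>i<n. \<Sum>j<n. (cmod (X $$ (i, j)))\<^sup>2)"
proof -
  let ?Y = "mat_adjoint X * X"
  have Y: "?Y \<in> carrier_mat n n"
    using X by auto
  define es where "es = (SOME es. char_poly ?Y = (\<Prod>e\<leftarrow>es. [:- e, 1:]))"
  have es: "char_poly ?Y = (\<Prod>e\<leftarrow>es. [:- e, 1:])"
    unfolding es_def by (rule someI_ex) (use char_poly_factorized[OF Y] in blast)
  have len: "length es = n"
    using degree_linear_factors[of uminus es] degree_monic_char_poly[OF Y] es by simp
  have nonneg: "0 \<le> Re e" if "e \<in> set es" for e
  proof (rule eigenvalue_adjoint_mult_nonneg[OF X])
    have "poly (char_poly ?Y) e = 0"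
      unfolding es poly_prod_list using that by (simp add: prod_list_zero_iff o_def)
    then show "eigenvalue ?Y e"
      using eigenvalue_root_char_poly[OF Y] by simp
  qed
  have "trace_norm X = (\<Sum>i<n. sqrt (Re (es ! i)))"
    unfolding trace_norm_def Let_def es_def[symmetric] using len
    by (simp add: sum_list_sum_nth atLeast0LessThan)
  then have "(trace_norm X)\<^sup>2 \<le> (\<Sum>i<n. (sqrt (Re (es ! i)))\<^sup>2) * n"
    using sum_squared_le_sum_of_squares[of "\<lambda>i. sqrt (Re (es ! i))" "{..<n}"] by simp
  also have "(\<Sum>i<n. (sqrt (Re (es ! i)))\<^sup>2) = Re (sum_list es)"
    using nonneg len by (simp add: sum_list_sum_nth atLeast0LessThan Re_sum nth_mem)
  also have "sum_list es = of_real (\<Sum>i<n. \<Sum>j<n. (cmod (X $$ (i, j)))\<^sup>2)"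
    using mat_trace_eq_sum_eigenvalues[OF Y es] mat_trace_adjoint_mult[OF X] by simp
  finally show ?thesis
    by (simp add: mult.commute)
qed

section \<open>Cauchy--Schwarz for the form\<close>

lemma sesq_form_nonneg:
  assumes S: "psd_mat S" "S \<in> carrier_mat K K"
  shows "0 \<le> Re (sesq_form S K L u u)"
proof -
  have "0 \<le> Re (\<Sum>b<K. \<Sum>b'<K. u l b * S $$ (b, b') * cnj (u l b'))" for l
  proof -
    define v where "v = vec K (\<lambda>b. cnj (u l b))"
    have v: "v \<in> carrier_vec (dim_row S)"
      using S(2) by (simp add: v_def)
    have "(\<Sum>i<dim_row S. cnj (v $ i) * (S *\<^sub>v v) $ i) = (\<Sum>b<K. \<Sum>b'<K. u l b * S $$ (b, b') * cnj (u l b'))"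
      using S(2) by (simp del: index_mult_mat_vec
          add: v_def index_mult_mat_vec_sum[OF S(2)] sum_distrib_left mult_ac)
    then show ?thesis
      using S(1) v unfolding psd_mat_def by metis
  qed
  then show ?thesis
    unfolding sesq_form_def Re_sum[of _ "{..<L}"] by (intro sum_nonneg)
qed

lemma sesq_form_swap:
  assumes S: "hermitian_mat S" "S \<in> carrier_mat K K"
  shows "sesq_form S K L v u = cnj (sesq_form S K L u v)"
proof -
  have "cnj (S $$ (b, b')) = S $$ (b', b)" if "b < K" "b' < K" for b b'
    using S that unfolding hermitian_mat_def by (metis carrier_matD index_mat_adjoint conjugate_complex_def)
  then have "cnj (sesq_form S K L u v) = (\<Sum>l<L. \<Sum>b<K. \<Sum>b'<K. v l b' * S $$ (b', b) * cnj (u l b))"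
    by (simp add: sesq_form_def cnj_sum mult_ac)
  also have "\<dots> = sesq_form S K L v u"
    unfolding sesq_form_def by (subst (2) sum.swap) simp
  finally show ?thesis ..
qed

lemma sesq_form_sub_scaled:
  "sesq_form S K L (\<lambda>l b. u l b - t * v l b) (\<lambda>l b. u l b - t * v l b) =
    sesq_form S K L u u - cnj t * sesq_form S K L u v - t * sesq_form S K L v u
      + t * cnj t * sesq_form S K L v v"
  by (simp add: sesq_form_def algebra_simps sum.distrib sum_subtractf sum_distrib_left)

lemma le_mult_if_quadratic_nonneg:
  fixes a c q :: real
  assumes "0 \<le> c" and quadratic: "\<And>r. 0 \<le> a - 2 * r * q + r\<^sup>2 * q * c"
  shows "q \<le> a * c"
proof (cases "c = 0")
  case True
  show ?thesis
  proof (rule ccontr)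
    assume "\<not> q \<le> a * c"
    with True have "0 < q" by simp
    with quadratic[of "(a + 1) / (2 * q)"] True show False
      by (simp add: field_simps)
  qed
next
  case False
  with quadratic[of "1 / c"] \<open>0 \<le> c\<close> show ?thesis
    by (simp add: field_simps power2_eq_square)
qed

lemma sesq_form_cauchy_schwarz:
  assumes S: "psd_mat S" "S \<in> carrier_mat K K"
  shows "(cmod (sesq_form S K L u v))\<^sup>2 \<le> Re (sesq_form S K L u u) * Re (sesq_form S K L v v)"
proof (rule le_mult_if_quadratic_nonneg)
  let ?z = "sesq_form S K L u v"
  have swap: "sesq_form S K L v u = cnj ?z"
    using S unfolding psd_mat_def by (intro sesq_form_swap) auto
  have norm_sq: "?z * cnj ?z = of_real ((cmod ?z)\<^sup>2)" "cnj ?z * ?z = of_real ((cmod ?z)\<^sup>2)"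
    by (simp_all only: complex_norm_square mult.commute)
  show "0 \<le> Re (sesq_form S K L v v)"
    using sesq_form_nonneg[OF S] .
  \<comment> \<open>positivity at \<open>u - t v\<close> with \<open>t = r \<langle>u, v\<rangle>\<close> is a quadratic inequality in the real \<open>r\<close>\<close>
  fix r :: real
  let ?t = "of_real r * ?z"
  have "0 \<le> Re (sesq_form S K L (\<lambda>l b. u l b - ?t * v l b) (\<lambda>l b. u l b - ?t * v l b))"
    by (rule sesq_form_nonneg[OF S])
  also have "\<dots> = Re (sesq_form S K L u u - of_real (r * (cmod ?z)\<^sup>2) - of_real (r * (cmod ?z)\<^sup>2)
      + of_real (r\<^sup>2 * (cmod ?z)\<^sup>2) * sesq_form S K L v v)"
  proof -
    have t: "cnj ?t * ?z = of_real r * (cnj ?z * ?z)" "?t * cnj ?z = of_real r * (?z * cnj ?z)"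
      "?t * cnj ?t = of_real (r\<^sup>2) * (?z * cnj ?z)"
      by (simp_all add: power2_eq_square mult_ac)
    show ?thesis
      by (simp only: sesq_form_sub_scaled swap t norm_sq of_real_mult[symmetric])
  qed
  also have "\<dots> = Re (sesq_form S K L u u) - 2 * r * (cmod ?z)\<^sup>2
      + r\<^sup>2 * (cmod ?z)\<^sup>2 * Re (sesq_form S K L v v)"
    by simp
  finally show "0 \<le> Re (sesq_form S K L u u) - 2 * r * (cmod ?z)\<^sup>2
      + r\<^sup>2 * (cmod ?z)\<^sup>2 * Re (sesq_form S K L v v)" .
qed

lemma sum_cmod_sq_sesq_form_le:
  assumes S: "psd_mat S" "S \<in> carrier_mat K K"
  shows "(\<Sum>a\<in>A. \<Sum>a'\<in>A. \<Sum>c\<in>C. \<Sum>c'\<in>C. (cmod (sesq_form S K L (u a c) (u a' c')))\<^sup>2)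
    \<le> (\<Sum>a\<in>A. \<Sum>c\<in>C. Re (sesq_form S K L (u a c) (u a c)))\<^sup>2"
proof -
  let ?R = "\<lambda>a c. Re (sesq_form S K L (u a c) (u a c))"
  have "(\<Sum>a\<in>A. \<Sum>a'\<in>A. \<Sum>c\<in>C. \<Sum>c'\<in>C. (cmod (sesq_form S K L (u a c) (u a' c')))\<^sup>2)
      \<le> (\<Sum>a\<in>A. \<Sum>a'\<in>A. \<Sum>c\<in>C. \<Sum>c'\<in>C. ?R a c * ?R a' c')"
    by (intro sum_mono sesq_form_cauchy_schwarz[OF S])
  also have "\<dots> = (\<Sum>a\<in>A. \<Sum>c\<in>C. ?R a c)\<^sup>2"
    by (simp add: power2_eq_square sum_product)
  finally show ?thesis .
qed

section \<open>Orthogonality of Pauli observables\<close>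

definition paulis :: "nat \<Rightarrow> pauli list set" where
  "paulis n = {ps. length ps = n}"

lemma UNIV_pauli: "(UNIV :: pauli set) = {PI, PX, PY, PZ}"
  using pauli.exhaust by auto

lemma finite_paulis: "finite (paulis n)"
proof -
  have "finite (UNIV :: pauli set)"
    by (simp add: UNIV_pauli)
  from finite_lists_length_eq[OF this, of n] show ?thesis
    by (simp add: paulis_def)
qed

lemma card_paulis: "card (paulis n) = 4 ^ n"
proof -
  have "finite (UNIV :: pauli set)" "card (UNIV :: pauli set) = 4"
    by (simp_all add: UNIV_pauli)
  with card_lists_length_eq[of "UNIV :: pauli set" n] show ?thesis
    by (simp add: paulis_def)
qed

lemma sum_paulis_Suc: "(\<Sum>ps\<in>paulis (Suc n). f ps) = (\<Sum>p\<in>UNIV. \<Sum>ps\<in>paulis n. f (p # ps))"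
proof -
  have "paulis (Suc n) = case_prod (#) ` (UNIV \<times> paulis n)"
    unfolding paulis_def by (auto simp: image_def length_Suc_conv)
  moreover have "inj_on (case_prod (#)) (UNIV \<times> paulis n)"
    by (auto simp: inj_on_def)
  ultimately have "(\<Sum>ps\<in>paulis (Suc n). f ps) = (\<Sum>(p, ps)\<in>UNIV \<times> paulis n. f (p # ps))"
    by (simp add: sum.reindex case_prod_beta')
  then show ?thesis
    by (simp add: sum.cartesian_product)
qed

lemma nonid_paulis_eq: "nonid_paulis n = paulis n - {replicate n PI}"
  by (auto simp: nonid_paulis_def paulis_def)

lemma card_nonid_paulis: "card (nonid_paulis n) = 4 ^ n - 1"
proof -
  have "replicate n PI \<in> paulis n"
    by (simp add: paulis_def)
  then show ?thesis
    by (simp add: nonid_paulis_eq card_Diff_singleton finite_paulis card_paulis)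
qed

lemma pauli_mat_carrier: "pauli_mat p \<in> carrier_mat 2 2"
  by (rule carrier_matI; cases p) (simp_all add: pauli_mat_def mat_of_rows_list_def)

lemma pauli_obs_carrier: "pauli_obs ps \<in> carrier_mat (2 ^ length ps) (2 ^ length ps)"
proof (induction ps)
  case (Cons p ps)
  then show ?case
    using pauli_mat_carrier[of p] by (intro carrier_matI) (simp_all add: carrier_matD)
qed simp

lemma pauli_mat_orthogonal:
  assumes "c < 2" "c' < 2" "d < 2" "d' < 2"
  shows "(\<Sum>p\<in>UNIV. pauli_mat p $$ (c, c') * cnj (pauli_mat p $$ (d, d'))) =
    (if (c, c') = (d, d') then 2 else 0)"
proof -
  have "c = 0 \<or> c = 1" "c' = 0 \<or> c' = 1" "d = 0 \<or> d = 1" "d' = 0 \<or> d' = 1"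
    using assms by auto
  then show ?thesis
    unfolding UNIV_pauli by (auto simp: pauli_mat_def mat_of_rows_list_def)
qed

lemma pauli_obs_orthogonal:
  assumes "c < 2^n" "c' < 2^n" "d < 2^n" "d' < 2^n"
  shows "(\<Sum>ps\<in>paulis n. pauli_obs ps $$ (c, c') * cnj (pauli_obs ps $$ (d, d'))) =
    (if (c, c') = (d, d') then 2^n else 0)"
  using assms
proof (induction n arbitrary: c c' d d')
  case 0
  then show ?case
    by (simp add: paulis_def)
next
  case (Suc n)
  let ?N = "2^n :: nat"
  have obs: "kron (pauli_mat p) (pauli_obs ps) $$ (x, y) =
      pauli_mat p $$ (x div ?N, y div ?N) * pauli_obs ps $$ (x mod ?N, y mod ?N)"
    if "ps \<in> paulis n" "x < 2 * ?N" "y < 2 * ?N" for p ps x y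
    using that pauli_obs_carrier[of ps] pauli_mat_carrier[of p]
    by (simp add: kron_def paulis_def)
  have div: "c div ?N < 2" "c' div ?N < 2" "d div ?N < 2" "d' div ?N < 2"
    using Suc.prems by (simp_all add: less_mult_imp_div_less)
  have "(\<Sum>ps\<in>paulis (Suc n). pauli_obs ps $$ (c, c') * cnj (pauli_obs ps $$ (d, d'))) =
      (\<Sum>p\<in>UNIV. \<Sum>ps\<in>paulis n.
        (pauli_mat p $$ (c div ?N, c' div ?N) * cnj (pauli_mat p $$ (d div ?N, d' div ?N))) *
        (pauli_obs ps $$ (c mod ?N, c' mod ?N) * cnj (pauli_obs ps $$ (d mod ?N, d' mod ?N))))"
    unfolding sum_paulis_Suc using Suc.prems by (intro sum.cong refl) (simp add: obs mult_ac)
  also have "\<dots> =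
      (\<Sum>p\<in>UNIV. pauli_mat p $$ (c div ?N, c' div ?N) * cnj (pauli_mat p $$ (d div ?N, d' div ?N))) *
      (\<Sum>ps\<in>paulis n. pauli_obs ps $$ (c mod ?N, c' mod ?N) * cnj (pauli_obs ps $$ (d mod ?N, d' mod ?N)))"
    by (simp add: sum_product)
  also have "\<dots> = (if (c div ?N, c' div ?N) = (d div ?N, d' div ?N) then 2 else 0) *
      (if (c mod ?N, c' mod ?N) = (d mod ?N, d' mod ?N) then of_nat ?N else 0)"
    by (simp add: pauli_mat_orthogonal[OF div] Suc.IH)
  also have "\<dots> = (if (c, c') = (d, d') then 2 ^ Suc n else 0)"
  proof -
    have "c = d \<longleftrightarrow> c div ?N = d div ?N \<and> c mod ?N = d mod ?N"
      "c' = d' \<longleftrightarrow> c' div ?N = d' div ?N \<and> c' mod ?N = d' mod ?N"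
      by (metis div_mult_mod_eq)+
    then show ?thesis
      by simp
  qed
  finally show ?case .
qed

lemma sum_cmod_sq_orthogonal_family:
  fixes e :: "'p \<Rightarrow> 'i \<Rightarrow> complex" and h :: "'i \<Rightarrow> complex"
  assumes I: "finite I"
    and orth: "\<And>x y. x \<in> I \<Longrightarrow> y \<in> I \<Longrightarrow>
      (\<Sum>p\<in>P. e p x * cnj (e p y)) = (if x = y then of_real C else 0)"
  shows "(\<Sum>p\<in>P. (cmod (\<Sum>x\<in>I. e p x * h x))\<^sup>2) = C * (\<Sum>x\<in>I. (cmod (h x))\<^sup>2)"
proof -
  have "of_real (\<Sum>p\<in>P. (cmod (\<Sum>x\<in>I. e p x * h x))\<^sup>2) =
      (\<Sum>p\<in>P. (\<Sum>x\<in>I. e p x * h x) * cnj (\<Sum>y\<in>I. e p y * h y))"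
    by (simp only: of_real_sum complex_norm_square)
  also have "\<dots> = (\<Sum>y\<in>I. \<Sum>x\<in>I. h x * cnj (h y) * (\<Sum>p\<in>P. e p x * cnj (e p y)))"
    by (simp add: cnj_sum sum_distrib_left sum_distrib_right mult_ac sum.swap[of _ I P])
  also have "\<dots> = (\<Sum>y\<in>I. \<Sum>x\<in>I. if x = y then of_real C * (h y * cnj (h y)) else 0)"
    by (intro sum.cong refl) (simp add: orth)
  also have "\<dots> = (\<Sum>y\<in>I. of_real C * (h y * cnj (h y)))"
    using I by simp
  also have "\<dots> = of_real (C * (\<Sum>x\<in>I. (cmod (h x))\<^sup>2))"
    by (simp only: of_real_mult of_real_sum complex_norm_square sum_distrib_left)
  finally show ?thesis
    by (simp only: of_real_eq_iff)
qed

lemma sum_paulis_cmod_sq: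
  fixes h :: "nat \<Rightarrow> nat \<Rightarrow> complex"
  shows "(\<Sum>P\<in>paulis n. (cmod (\<Sum>c<2^n. \<Sum>c'<2^n. pauli_obs P $$ (c, c') * h c c'))\<^sup>2) =
    2^n * (\<Sum>c<2^n. \<Sum>c'<2^n. (cmod (h c c'))\<^sup>2)"
proof -
  let ?I = "{..<2^n :: nat} \<times> {..<2^n :: nat}"
  have "(\<Sum>P\<in>paulis n. (cmod (\<Sum>x\<in>?I. pauli_obs P $$ x * case_prod h x))\<^sup>2) =
      2^n * (\<Sum>x\<in>?I. (cmod (case_prod h x))\<^sup>2)"
  proof (rule sum_cmod_sq_orthogonal_family)
    fix x y assume "x \<in> ?I" "y \<in> ?I"
    then show "(\<Sum>P\<in>paulis n. pauli_obs P $$ x * cnj (pauli_obs P $$ y)) =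
        (if x = y then of_real (2^n) else 0)"
      by (cases x, cases y) (simp add: pauli_obs_orthogonal)
  qed simp
  then show ?thesis
    by (simp add: sum.cartesian_product case_prod_unfold)
qed

lemma mat_trace_adjoint_mult_kron_one:
  fixes M S :: "complex mat"
  assumes M: "M \<in> carrier_mat (2^k * 2^r) (K * N)" and S: "S \<in> carrier_mat K K"
  shows "mat_trace (mat_adjoint M * M * kron S (1\<^sub>m N)) =
    (\<Sum>a<2^k. \<Sum>c<N. sesq_form S K (2^r) (mat_slice M (2^r) N a c) (mat_slice M (2^r) N a c))"
proof -
  have delta: "(if c = c' then 1 else 0) * x = (if c = c' then x else 0)" for c c' :: nat and x :: complex
    by simp
  have kron: "kron S (1\<^sub>m N) \<in> carrier_mat (K * N) (K * N)"
    using S by auto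
  have adj: "mat_adjoint M \<in> carrier_mat (K * N) (2^k * 2^r)"
    using M by (rule mat_adjoint_carrier)
  have "mat_trace (mat_adjoint M * M * kron S (1\<^sub>m N)) = mat_trace (mat_adjoint M * (M * kron S (1\<^sub>m N)))"
    by (simp add: assoc_mult_mat[OF adj M kron])
  also have "\<dots> = mat_trace (M * kron S (1\<^sub>m N) * mat_adjoint M)"
    using M kron adj by (intro mat_trace_mult_comm) auto
  also have "\<dots> = mat_trace (ptrace_keep k r (M * kron S (1\<^sub>m N) * mat_adjoint M))"
    using M kron adj by (intro mat_trace_ptrace_keep[symmetric]) auto
  also have "\<dots> = (\<Sum>a<2^k. \<Sum>c<N. \<Sum>c'<N. 1\<^sub>m N $$ (c, c') *
      sesq_form S K (2^r) (mat_slice M (2^r) N a c) (mat_slice M (2^r) N a c'))"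
    by (simp add: mat_trace_def index_ptrace_keep_kron[OF M S one_carrier_mat])
  also have "\<dots> = (\<Sum>a<2^k. \<Sum>c<N. sesq_form S K (2^r) (mat_slice M (2^r) N a c) (mat_slice M (2^r) N a c))"
    by (simp add: delta)
  finally show ?thesis .
qed

lemma index_ptrace_keep_kron_mixed_diff:
  fixes M S P :: "complex mat"
  assumes M: "M \<in> carrier_mat (2^k * 2^r) (K * 2^n)" and S: "S \<in> carrier_mat K K"
    and P: "P \<in> carrier_mat (2^n) (2^n)" and a: "a < 2^k" and a': "a' < 2^k"
  shows "(ptrace_keep k r (M * kron S ((1 / 2^n) \<cdot>\<^sub>m 1\<^sub>m (2^n)) * mat_adjoint M)
      - ptrace_keep k r (M * kron S ((1 / 2^n) \<cdot>\<^sub>m (1\<^sub>m (2^n) + P)) * mat_adjoint M)) $$ (a, a') =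
    - (\<Sum>c<2^n. \<Sum>c'<2^n. P $$ (c, c') *
        sesq_form S K (2^r) (mat_slice M (2^r) (2^n) a c) (mat_slice M (2^r) (2^n) a' c')) / 2^n"
proof -
  have "(ptrace_keep k r (M * kron S ((1 / 2^n) \<cdot>\<^sub>m 1\<^sub>m (2^n)) * mat_adjoint M)
      - ptrace_keep k r (M * kron S ((1 / 2^n) \<cdot>\<^sub>m (1\<^sub>m (2^n) + P)) * mat_adjoint M)) $$ (a, a') =
    (\<Sum>c<2^n. \<Sum>c'<2^n. ((1 / 2^n) \<cdot>\<^sub>m 1\<^sub>m (2^n) - (1 / 2^n) \<cdot>\<^sub>m (1\<^sub>m (2^n) + P)) $$ (c, c') *
        sesq_form S K (2^r) (mat_slice M (2^r) (2^n) a c) (mat_slice M (2^r) (2^n) a' c'))"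
    using a a' P by (simp add: index_ptrace_keep_kron[OF M S] sum_subtractf left_diff_distrib)
  also have "\<dots> = - (\<Sum>c<2^n. \<Sum>c'<2^n. P $$ (c, c') *
        sesq_form S K (2^r) (mat_slice M (2^r) (2^n) a c) (mat_slice M (2^r) (2^n) a' c')) / 2^n"
  proof -
    have "((1 / 2^n) \<cdot>\<^sub>m 1\<^sub>m (2^n) - (1 / 2^n) \<cdot>\<^sub>m (1\<^sub>m (2^n) + P)) $$ (c, c') = - P $$ (c, c') / 2^n"
      if "c < 2^n" "c' < 2^n" for c c'
      using that P by (simp add: field_simps)
    then show ?thesis
      by (simp add: sum_divide_distrib sum_negf)
  qed
  finally show ?thesis .
qed

lemma sum_paulis_trace_norm_sq_le:
  fixes M S :: "complex mat"
  assumes M: "M \<in> carrier_mat (2^k * 2^r) (K * 2^n)" and S: "S \<in> carrier_mat K K" "psd_mat S"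
  shows "(\<Sum>P\<in>paulis n.
      (trace_norm (ptrace_keep k r (M * kron S ((1 / 2^n) \<cdot>\<^sub>m 1\<^sub>m (2^n)) * mat_adjoint M)
        - ptrace_keep k r (M * kron S ((1 / 2^n) \<cdot>\<^sub>m (1\<^sub>m (2^n) + pauli_obs P)) * mat_adjoint M)))\<^sup>2)
    \<le> 2^k / 2^n * (Re (mat_trace (mat_adjoint M * M * kron S (1\<^sub>m (2^n)))))\<^sup>2"
proof -
  let ?N = "2^n :: nat" and ?L = "2^r :: nat"
  define g where "g a a' c c' = sesq_form S K ?L (mat_slice M ?L ?N a c) (mat_slice M ?L ?N a' c')"
    for a a' c c'
  define h where "h P a a' = (\<Sum>c<?N. \<Sum>c'<?N. pauli_obs P $$ (c, c') * g a a' c c')" for P a a'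
  define D where "D P = ptrace_keep k r (M * kron S ((1 / 2^n) \<cdot>\<^sub>m 1\<^sub>m ?N) * mat_adjoint M)
    - ptrace_keep k r (M * kron S ((1 / 2^n) \<cdot>\<^sub>m (1\<^sub>m ?N + pauli_obs P)) * mat_adjoint M)" for P
  have D_carrier: "D P \<in> carrier_mat (2^k) (2^k)" for P
    unfolding D_def by (intro minus_carrier_mat ptrace_keep_carrier)
  have D_index: "D P $$ (a, a') = - h P a a' / 2^n"
    if "P \<in> paulis n" "a < 2^k" "a' < 2^k" for P a a'
    unfolding D_def h_def g_def using that pauli_obs_carrier[of P]
    by (intro index_ptrace_keep_kron_mixed_diff[OF M S(1)]) (simp_all add: paulis_def)
  have twirl: "(\<Sum>a<2^k. \<Sum>a'<2^k. \<Sum>P\<in>paulis n. (cmod (h P a a'))\<^sup>2) =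
      2^n * (\<Sum>a<2^k. \<Sum>a'<2^k. \<Sum>c<?N. \<Sum>c'<?N. (cmod (g a a' c c'))\<^sup>2)"
    by (simp add: h_def sum_paulis_cmod_sq sum_distrib_left)
  have "(\<Sum>P\<in>paulis n. (trace_norm (D P))\<^sup>2)
      \<le> (\<Sum>P\<in>paulis n. 2^k * (\<Sum>a<2^k. \<Sum>a'<2^k. (cmod (D P $$ (a, a')))\<^sup>2))"
    by (intro sum_mono) (use trace_norm_sq_le[OF D_carrier] in simp)
  also have "\<dots> = 2^k / (2^n)\<^sup>2 * (\<Sum>a<2^k. \<Sum>a'<2^k. \<Sum>P\<in>paulis n. (cmod (h P a a'))\<^sup>2)"
    by (simp add: D_index norm_divide norm_power power_divide sum_distrib_left sum_divide_distrib
        sum.swap[of _ "{..<2^k}" "paulis n"])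
  also have "\<dots> = 2^k / 2^n * (\<Sum>a<2^k. \<Sum>a'<2^k. \<Sum>c<?N. \<Sum>c'<?N. (cmod (g a a' c c'))\<^sup>2)"
    unfolding twirl by (simp add: field_simps power2_eq_square)
  also have "\<dots> \<le> 2^k / 2^n * (\<Sum>a<2^k. \<Sum>c<?N. Re (g a a c c))\<^sup>2"
    unfolding g_def by (intro mult_left_mono sum_cmod_sq_sesq_form_le S) simp
  also have "\<dots> = 2^k / 2^n * (Re (mat_trace (mat_adjoint M * M * kron S (1\<^sub>m ?N))))\<^sup>2"
    by (simp add: g_def mat_trace_adjoint_mult_kron_one[OF M S(1)] Re_sum)
  finally show ?thesis
    unfolding D_def .
qed

theorem mainTheorem11:
  fixes k n m :: nat and M \<Sigma> :: "complex mat"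
  assumes "n \<ge> 1"
    and "M \<in> carrier_mat (2^(k+n+m)) (2^(k+n))"
    and "psd_mat (1\<^sub>m (2^(k+n)) - mat_adjoint M * M)"
    and "\<Sigma> \<in> carrier_mat (2^k) (2^k)"
    and "psd_mat \<Sigma>"
  shows "(\<Sum>P\<in>nonid_paulis n.
            (trace_norm (A_map k n m M \<Sigma> ((1 / 2^n) \<cdot>\<^sub>m 1\<^sub>m (2^n))
                       - A_map k n m M \<Sigma> ((1 / 2^n) \<cdot>\<^sub>m (1\<^sub>m (2^n) + pauli_obs P))))^2)
          / real (card (nonid_paulis n))
       \<le> (2^k / 2^n) * (1 / (2^(2*n) - 1))
          * (Re (mat_trace (mat_adjoint M * M * kron \<Sigma> (1\<^sub>m (2^n)))))^2"
proof -
  let ?T = "Re (mat_trace (mat_adjoint M * M * kron \<Sigma> (1\<^sub>m (2^n))))"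
  let ?D = "\<lambda>P. A_map k n m M \<Sigma> ((1 / 2^n) \<cdot>\<^sub>m 1\<^sub>m (2^n))
    - A_map k n m M \<Sigma> ((1 / 2^n) \<cdot>\<^sub>m (1\<^sub>m (2^n) + pauli_obs P))"
  have M: "M \<in> carrier_mat (2^k * 2^(n+m)) (2^k * 2^n)"
    using assms(2) by (simp add: power_add mult.assoc)
  have "(\<Sum>P\<in>nonid_paulis n. (trace_norm (?D P))\<^sup>2) \<le> (\<Sum>P\<in>paulis n. (trace_norm (?D P))\<^sup>2)"
    by (rule sum_mono2) (auto simp: finite_paulis nonid_paulis_eq)
  also have "\<dots> \<le> 2^k / 2^n * ?T\<^sup>2"
    unfolding A_map_def by (rule sum_paulis_trace_norm_sq_le[OF M assms(4,5)])
  finally have bound: "(\<Sum>P\<in>nonid_paulis n. (trace_norm (?D P))\<^sup>2) \<le> 2^k / 2^n * ?T\<^sup>2" .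
  have card: "real (card (nonid_paulis n)) = 2^(2*n) - 1"
    by (simp add: card_nonid_paulis of_nat_diff power_mult)
  have "(0::real) < 2^(2*n) - 1"
    using assms(1) by (simp add: power_mult)
  with bound have "(\<Sum>P\<in>nonid_paulis n. (trace_norm (?D P))\<^sup>2) / (2^(2*n) - 1)
      \<le> 2^k / 2^n * ?T\<^sup>2 / (2^(2*n) - 1)"
    by (intro divide_right_mono) auto
  then show ?thesis
    unfolding card by simp
qed

end
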